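(* Let $K$ be a biquadratic bicyclic number field. Then $$(\{\rho_0\mathcal{O}_K:\rho_0\in K,\ \rho_0^2\in\mathbb{Q}\}:j_{\mathbb{Q}}^K(\mathcal P_{\mathbb{Q}}))=\begin{cases}4&\text{if }\sqrt{-1}\notin K,\\2&\text{if }\sqrt{-1}\in K.\end{cases}$$
   Context: $j_{\mathbb{Q}}^K(\mathcal P_{\mathbb{Q}})=\{x\mathcal{O}_K:x\in\mathbb{Q}^\times\}$, the group of fractional ideals of $K$ generated by nonzero rationals; both groups are subgroups of the group of nonzero fractional ideals of $K$. *)

theory Defs
  imports "HOL-Computational_Algebra.Polynomial" Complex_Main
begin

text \<open>Number fields are taken as subfields of the complex numbers.
A biquadratic bicyclic field is K = Q(sqrt a, sqrt b) with a, b, ab non-squares.\<close>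

definition is_int_square :: "int \<Rightarrow> bool" where
  "is_int_square a \<longleftrightarrow> (\<exists>c::int. a = c * c)"

definition quad_field2 :: "int \<Rightarrow> int \<Rightarrow> complex set" where
  "quad_field2 a b = {p + q * csqrt (of_int a) + r * csqrt (of_int b)
        + s * csqrt (of_int a) * csqrt (of_int b) | p q r s.
        p \<in> \<rat> \<and> q \<in> \<rat> \<and> r \<in> \<rat> \<and> s \<in> \<rat>}"

definition biquadratic_bicyclic :: "complex set \<Rightarrow> bool" where
  "biquadratic_bicyclic K \<longleftrightarrow> (\<exists>a b :: int.
     \<not> is_int_square a \<and> \<not> is_int_square b \<and> \<not> is_int_square (a * b) \<and>
     K = quad_field2 a b)"

definition algebraic_integer :: "complex \<Rightarrow> bool" where
  "algebraic_integer x \<longleftrightarrow> (\<exists>p :: complex poly.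
     lead_coeff p = 1 \<and> (\<forall>i. coeff p i \<in> \<int>) \<and> poly p x = 0)"

definition ring_of_integers :: "complex set \<Rightarrow> complex set" where
  "ring_of_integers K = {x \<in> K. algebraic_integer x}"

definition princ_ideal :: "complex set \<Rightarrow> complex \<Rightarrow> complex set" where
  "princ_ideal K x = (\<lambda>\<alpha>. x * \<alpha>) ` ring_of_integers K"

definition ideal_mult :: "complex set \<Rightarrow> complex set \<Rightarrow> complex set" where
  "ideal_mult I J = {s. \<exists>(n::nat) f g. (\<forall>i<n. f i \<in> I \<and> g i \<in> J) \<and> s = (\<Sum>i<n. f i * g i)}"

definition ideal_group_index :: "complex set set \<Rightarrow> complex set set \<Rightarrow> nat" where
  "ideal_group_index G H = card ((\<lambda>I. (\<lambda>J. ideal_mult I J) ` H) ` G)"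

definition sqrt_rat_ideals :: "complex set \<Rightarrow> complex set set" where
  "sqrt_rat_ideals K = {princ_ideal K \<rho> | \<rho>. \<rho> \<in> K \<and> \<rho> \<noteq> 0 \<and> \<rho>^2 \<in> \<rat>}"

text \<open>j_Q^K(P_Q): ideals x O_K with x a nonzero rational.\<close>
definition rat_ideals :: "complex set \<Rightarrow> complex set set" where
  "rat_ideals K = {princ_ideal K x | x. x \<in> \<rat> \<and> x \<noteq> 0}"

end

theory Submission
  imports Defs "Jordan_Normal_Form.Char_Poly"
begin

text \<open>Write K = Q(sqrt a, sqrt b). Since 1, sqrt a, sqrt b, sqrt a sqrt b are linearly
  independent over Q, every rho in K with rho^2 rational is a rational multiple of one of
  them. Two such elements rho, rho' give the same coset iff rho / rho' is a rational times
  a unit of O_K; a unit with rational square has square 1 or -1 (it and its inverse square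
  to rational algebraic integers), so this happens iff rho / rho' lies in Q^x or i Q^x.
  Up to rational squares the squared ratios of the four generators are a, b and ab, so
  two of their cosets coincide iff -a, -b or -ab is a rational square, i.e. iff i is in K;
  at most one of -a, -b, -ab is a square, leaving 2 cosets instead of 4.

  That O_K is a ring rests on the closure of algebraic integers under sums and products,
  shown via their characterisation as eigenvalues of integer matrices.\<close>

section \<open>Sums and products of algebraic integers\<close>

definition int_span :: "'i set \<Rightarrow> ('i \<Rightarrow> 'a :: ring_1) \<Rightarrow> 'a set" where
  "int_span I v = {\<Sum>j\<in>I. of_int (c j) * v j | c. True}"

lemma int_spanI: "z = (\<Sum>j\<in>I. of_int (c j) * v j) \<Longrightarrow> z \<in> int_span I v"
  unfolding int_span_def by blast

lemma int_spanE:
  assumes "z \<in> int_span I v"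
  obtains c where "z = (\<Sum>j\<in>I. of_int (c j) * v j)"
  using assms unfolding int_span_def by blast

lemma int_span_generator:
  assumes "finite I" "i \<in> I"
  shows "v i \<in> int_span I v"
proof (rule int_spanI)
  have "(\<Sum>j\<in>I. of_int (if j = i then 1 else 0) * v j) = (\<Sum>j\<in>I. if j = i then v j else 0)"
    by (rule sum.cong) auto
  thus "v i = (\<Sum>j\<in>I. of_int (if j = i then 1 else 0) * v j)"
    using assms by simp
qed

lemma int_span_add:
  assumes "z \<in> int_span I v" "w \<in> int_span I v"
  shows "z + w \<in> int_span I v"
proof -
  obtain c d where "z = (\<Sum>j\<in>I. of_int (c j) * v j)" "w = (\<Sum>j\<in>I. of_int (d j) * v j)"
    using assms by (metis int_spanE)
  hence "z + w = (\<Sum>j\<in>I. of_int (c j + d j) * v j)"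
    by (simp add: sum.distrib distrib_right)
  thus ?thesis by (rule int_spanI)
qed

lemma int_span_times:
  fixes v u :: "_ \<Rightarrow> 'a :: comm_ring_1"
  assumes "finite I" "finite J" "z \<in> int_span I v" "w \<in> int_span J u"
  shows "z * w \<in> int_span (I \<times> J) (\<lambda>(i, j). v i * u j)"
proof -
  obtain c d where "z = (\<Sum>i\<in>I. of_int (c i) * v i)" "w = (\<Sum>j\<in>J. of_int (d j) * u j)"
    using assms(3,4) by (metis int_spanE)
  hence "z * w = (\<Sum>(i, j)\<in>I \<times> J. of_int (c i * d j) * (v i * u j))"
    by (simp add: sum_product sum.cartesian_product mult_ac)
  also have "\<dots> = (\<Sum>k\<in>I \<times> J. of_int ((\<lambda>(i, j). c i * d j) k) * (\<lambda>(i, j). v i * u j) k)"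
    by (simp add: case_prod_beta)
  finally show ?thesis by (rule int_spanI)
qed

lemma int_span_matrix:
  assumes "\<And>i. i \<in> I \<Longrightarrow> x * v i \<in> int_span I v"
  obtains A where "\<And>i. i \<in> I \<Longrightarrow> x * v i = (\<Sum>j\<in>I. of_int (A i j) * v j)"
proof -
  have "\<forall>i\<in>I. \<exists>a. x * v i = (\<Sum>j\<in>I. of_int (a j) * v j)"
    using assms unfolding int_span_def by blast
  from bchoice[OF this] obtain A where "\<forall>i\<in>I. x * v i = (\<Sum>j\<in>I. of_int (A i j) * v j)"
    by blast
  thus ?thesis using that by blast
qed

lemma int_span_mult_invariant:
  fixes v :: "_ \<Rightarrow> 'a :: comm_ring_1"
  assumes "\<And>i. i \<in> I \<Longrightarrow> x * v i \<in> int_span I v" "z \<in> int_span I v"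
  shows "x * z \<in> int_span I v"
proof -
  obtain A where A: "\<And>i. i \<in> I \<Longrightarrow> x * v i = (\<Sum>j\<in>I. of_int (A i j) * v j)"
    using int_span_matrix[OF assms(1)] by blast
  obtain c where z: "z = (\<Sum>i\<in>I. of_int (c i) * v i)"
    using assms(2) by (rule int_spanE)
  have "x * z = (\<Sum>i\<in>I. of_int (c i) * (x * v i))"
    unfolding z by (simp add: sum_distrib_left mult.left_commute)
  also have "\<dots> = (\<Sum>i\<in>I. \<Sum>j\<in>I. of_int (c i * A i j) * v j)"
    by (simp add: A sum_distrib_left mult.assoc)
  also have "\<dots> = (\<Sum>j\<in>I. \<Sum>i\<in>I. of_int (c i * A i j) * v j)"
    by (rule sum.swap)
  also have "\<dots> = (\<Sum>j\<in>I. of_int (\<Sum>i\<in>I. c i * A i j) * v j)"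
    by (simp only: of_int_sum sum_distrib_right)
  finally show ?thesis by (rule int_spanI)
qed

text \<open>x is an eigenvalue of the integer matrix representing multiplication by x,
  so it is a root of that matrix's monic characteristic polynomial.\<close>
lemma algebraic_int_of_int_span:
  fixes x :: "'a :: field_char_0"
  assumes "finite I" "i \<in> I" "v i \<noteq> 0" "\<And>j. j \<in> I \<Longrightarrow> x * v j \<in> int_span I v"
  shows "algebraic_int x"
proof -
  obtain A where A: "\<And>i. i \<in> I \<Longrightarrow> x * v i = (\<Sum>j\<in>I. of_int (A i j) * v j)"
    using int_span_matrix[OF assms(4)] by blast
  define n where "n = card I"
  obtain f where f: "bij_betw f {0..<n} I"
    using ex_bij_betw_nat_finite[OF assms(1)] n_def by blast
  define M :: "int mat" where "M = mat n n (\<lambda>(i, j). A (f i) (f j))"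
  define w :: "'a vec" where "w = vec n (\<lambda>i. v (f i))"
  have M: "M \<in> carrier_mat n n" unfolding M_def by simp
  have M': "(map_mat of_int M :: 'a mat) \<in> carrier_mat n n" using M by simp
  obtain k where k: "k < n" "f k = i" using f assms(2) unfolding bij_betw_def by auto
  have "w \<noteq> 0\<^sub>v n"
  proof
    assume "w = 0\<^sub>v n"
    hence "w $ k = 0" using k by simp
    thus False using k assms(3) unfolding w_def by simp
  qed
  moreover have "map_mat of_int M *\<^sub>v w = x \<cdot>\<^sub>v w"
  proof (rule eq_vecI)
    fix i assume "i < dim_vec (x \<cdot>\<^sub>v w)"
    hence i: "i < n" unfolding w_def by simp
    have "(map_mat of_int M *\<^sub>v w) $ i = (\<Sum>j = 0..<n. of_int (A (f i) (f j)) * v (f j))"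
      using i unfolding M_def w_def by (simp add: mult_mat_vec_def scalar_prod_def)
    also have "\<dots> = (\<Sum>j\<in>I. of_int (A (f i) j) * v j)"
      using sum.reindex_bij_betw[OF f, of "\<lambda>j. of_int (A (f i) j) * v j"] by simp
    also have "\<dots> = x * v (f i)" using A f i unfolding bij_betw_def by auto
    finally show "(map_mat of_int M *\<^sub>v w) $ i = (x \<cdot>\<^sub>v w) $ i" using i unfolding w_def by simp
  qed (simp add: w_def M_def)
  moreover have "w \<in> carrier_vec n" unfolding w_def by simp
  ultimately have "eigenvalue (map_mat of_int M) x"
    unfolding eigenvalue_def eigenvector_def using M' by auto
  hence "poly (char_poly (map_mat of_int M)) x = 0"
    using eigenvalue_root_char_poly[OF M'] by simp
  moreover have "char_poly (map_mat of_int M :: 'a mat) = map_poly of_int (char_poly M)"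
    by (rule of_int_hom.char_poly_hom[OF M])
  moreover have "lead_coeff (char_poly M) = 1" using degree_monic_char_poly[OF M] by simp
  ultimately show ?thesis unfolding algebraic_int_altdef_ipoly by auto
qed

lemma int_span_powers:
  fixes x :: "'a :: field_char_0"
  assumes "algebraic_int x"
  obtains n where "0 < n" "\<And>i. i < n \<Longrightarrow> x * x ^ i \<in> int_span {..<n} (\<lambda>i. x ^ i)"
proof -
  obtain p :: "int poly" where root: "poly (map_poly of_int p) x = 0" and monic: "lead_coeff p = 1"
    using assms unfolding algebraic_int_altdef_ipoly by blast
  define n where "n = degree p"
  have "n \<noteq> 0"
  proof
    assume "n = 0"
    hence "p = [:1:]" using monic degree_0_id[of p] unfolding n_def by simp
    thus False using root by simp
  qed
  moreover have "x * x ^ i \<in> int_span {..<n} (\<lambda>i. x ^ i)" if "i < n" for i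
  proof (cases "Suc i < n")
    case True
    thus ?thesis by (simp add: int_span_generator flip: power_Suc)
  next
    case False
    with that have i: "Suc i = n" by simp
    have "0 = (\<Sum>j\<le>n. of_int (coeff p j) * x ^ j)"
      using root by (simp add: poly_altdef n_def degree_map_poly)
    also have "\<dots> = (\<Sum>j<n. of_int (coeff p j) * x ^ j) + x ^ n"
      using monic by (simp add: n_def lessThan_Suc_atMost[symmetric])
    finally have "x * x ^ i = (\<Sum>j<n. of_int (- coeff p j) * x ^ j)"
      by (simp add: i sum_negf eq_neg_iff_add_eq_0 add.commute flip: power_Suc)
    thus ?thesis by (rule int_spanI)
  qed
  ultimately show ?thesis using that by blast
qed

text \<open>The products x^i y^j with i, j below the degrees span a lattice stable
  under multiplication by x and by y.\<close>
lemma common_int_span: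
  fixes x y :: "'a :: field_char_0"
  assumes "algebraic_int x" "algebraic_int y"
  obtains I :: "(nat \<times> nat) set" and u k where "finite I" "k \<in> I" "u k = 1"
    "\<And>i. i \<in> I \<Longrightarrow> x * u i \<in> int_span I u" "\<And>i. i \<in> I \<Longrightarrow> y * u i \<in> int_span I u"
proof -
  obtain n where n: "0 < n" "\<And>i. i < n \<Longrightarrow> x * x ^ i \<in> int_span {..<n} (\<lambda>i. x ^ i)"
    using int_span_powers[OF assms(1)] by blast
  obtain m where m: "0 < m" "\<And>j. j < m \<Longrightarrow> y * y ^ j \<in> int_span {..<m} (\<lambda>j. y ^ j)"
    using int_span_powers[OF assms(2)] by blast
  define u where "u = (\<lambda>(i, j). x ^ i * y ^ j :: 'a)"
  have x_stable: "x * u p \<in> int_span ({..<n} \<times> {..<m}) u" if "p \<in> {..<n} \<times> {..<m}" for p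
  proof -
    obtain i j where p: "p = (i, j)" by (cases p)
    with that have ij: "i < n" "j < m" by auto
    have "(x * x ^ i) * y ^ j \<in> int_span ({..<n} \<times> {..<m}) u"
      unfolding u_def using ij by (intro int_span_times n(2) int_span_generator) auto
    thus ?thesis by (simp add: u_def p mult.assoc)
  qed
  have y_stable: "y * u p \<in> int_span ({..<n} \<times> {..<m}) u" if "p \<in> {..<n} \<times> {..<m}" for p
  proof -
    obtain i j where p: "p = (i, j)" by (cases p)
    with that have ij: "i < n" "j < m" by auto
    have "x ^ i * (y * y ^ j) \<in> int_span ({..<n} \<times> {..<m}) u"
      unfolding u_def using ij by (intro int_span_times m(2) int_span_generator) auto
    thus ?thesis by (simp add: u_def p mult.left_commute)
  qed
  show ?thesis
    by (rule that[OF _ _ _ x_stable y_stable, where k = "(0, 0)"]) (use n m in \<open>simp_all add: u_def\<close>)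
qed

lemma algebraic_int_plus:
  fixes x y :: "'a :: field_char_0"
  assumes "algebraic_int x" "algebraic_int y"
  shows "algebraic_int (x + y)"
proof -
  obtain I :: "(nat \<times> nat) set" and k u where I: "finite I" "k \<in> I" "u k = 1"
    and x: "\<And>i. i \<in> I \<Longrightarrow> x * u i \<in> int_span I u" and y: "\<And>i. i \<in> I \<Longrightarrow> y * u i \<in> int_span I u"
    by (rule common_int_span[OF assms]) blast
  show ?thesis
  proof (rule algebraic_int_of_int_span[OF I(1,2)])
    show "u k \<noteq> 0" using I(3) by simp
    fix i assume "i \<in> I"
    thus "(x + y) * u i \<in> int_span I u" by (simp add: distrib_right int_span_add x y)
  qed
qed

lemma algebraic_int_times:
  fixes x y :: "'a :: field_char_0"
  assumes "algebraic_int x" "algebraic_int y"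
  shows "algebraic_int (x * y)"
proof -
  obtain I :: "(nat \<times> nat) set" and k u where I: "finite I" "k \<in> I" "u k = 1"
    and x: "\<And>i. i \<in> I \<Longrightarrow> x * u i \<in> int_span I u" and y: "\<And>i. i \<in> I \<Longrightarrow> y * u i \<in> int_span I u"
    by (rule common_int_span[OF assms]) blast
  show ?thesis
  proof (rule algebraic_int_of_int_span[OF I(1,2)])
    show "u k \<noteq> 0" using I(3) by simp
    fix i assume "i \<in> I"
    thus "x * y * u i \<in> int_span I u"
      using int_span_mult_invariant[OF x y] by (simp add: mult.assoc)
  qed
qed

section \<open>Principal ideals modulo ideals generated by rationals\<close>

lemma is_int_square_of_Rats:
  fixes r :: "'a :: field_char_0"
  assumes "r \<in> \<rat>" "r ^ 2 = of_int t"
  shows "is_int_square t"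
proof -
  have "algebraic_int r"
    by (rule algebraic_int_root[where p = "monom 1 2" and y = "of_int t"])
       (use assms in \<open>auto simp: poly_monom degree_monom_eq\<close>)
  then obtain c where "r = of_int c"
    using rational_algebraic_int_is_int assms(1) by (auto elim: Ints_cases)
  hence "(of_int t :: 'a) = of_int (c * c)" using assms(2) by (simp add: power2_eq_square)
  thus ?thesis unfolding is_int_square_def of_int_eq_iff by blast
qed

lemma is_int_square_neg_if_ii_eq:
  assumes "\<i> = c * z" "c \<in> \<rat>" "z ^ 2 = of_int t"
  shows "is_int_square (- t)"
proof (rule is_int_square_of_Rats)
  have "c \<noteq> 0" using assms(1) by auto
  moreover have "c ^ 2 * of_int t = -1"
    using assms(1,3) by (metis power2_i power_mult_distrib)
  ultimately have "of_int t = - 1 / c ^ 2"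
    by (simp add: field_simps)
  thus "(1 / c) ^ 2 = (of_int (- t) :: complex)"
    by (simp add: power_divide)
  show "1 / c \<in> \<rat>" using assms(2) by simp
qed

lemma algebraic_int_unit_square:
  fixes u :: "'a :: field_char_0"
  assumes "u \<noteq> 0" "algebraic_int u" "algebraic_int (inverse u)" "u ^ 2 \<in> \<rat>"
  shows "u ^ 2 = 1 \<or> u ^ 2 = -1"
proof -
  have "algebraic_int (u ^ 2)" "algebraic_int (inverse u ^ 2)"
    using assms(2,3) by (simp_all add: power2_eq_square algebraic_int_times)
  moreover have "inverse u ^ 2 \<in> \<rat>" using assms(4) by (simp add: power_inverse)
  ultimately obtain m n where m: "u ^ 2 = of_int m" and n: "inverse u ^ 2 = of_int n"
    using rational_algebraic_int_is_int assms(4) by (metis Ints_cases)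
  have "(of_int (m * n) :: 'a) = 1"
    using assms(1) by (simp flip: m n add: field_simps power_inverse)
  hence "m * n = 1" by (simp only: of_int_eq_1_iff)
  hence "m = 1 \<or> m = -1" using zmult_eq_1_iff by blast
  thus ?thesis using m by auto
qed

lemma mem_ring_of_integers: "x \<in> ring_of_integers K \<longleftrightarrow> x \<in> K \<and> algebraic_int x"
  unfolding ring_of_integers_def algebraic_integer_def algebraic_int.simps by blast

locale rat_subalgebra =
  fixes K :: "complex set"
  assumes Rats_subset: "\<rat> \<subseteq> K"
    and add_closed: "x \<in> K \<Longrightarrow> y \<in> K \<Longrightarrow> x + y \<in> K"
    and mult_closed: "x \<in> K \<Longrightarrow> y \<in> K \<Longrightarrow> x * y \<in> K"
begin

lemma Rats_mem: "q \<in> \<rat> \<Longrightarrow> q \<in> K"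
  using Rats_subset by blast

lemma ring_of_integers_mult: "x \<in> ring_of_integers K \<Longrightarrow> y \<in> ring_of_integers K \<Longrightarrow> x * y \<in> ring_of_integers K"
  by (simp add: mem_ring_of_integers mult_closed algebraic_int_times)

lemma ring_of_integers_sum:
  fixes n :: nat
  assumes "\<forall>i<n. f i \<in> ring_of_integers K \<and> g i \<in> ring_of_integers K"
  shows "(\<Sum>i<n. f i * g i) \<in> ring_of_integers K"
  using assms
proof (induction n)
  case 0
  show ?case using Rats_mem[of 0] by (simp add: mem_ring_of_integers)
next
  case (Suc n)
  thus ?case by (simp add: mem_ring_of_integers add_closed algebraic_int_plus ring_of_integers_mult[unfolded mem_ring_of_integers])
qed

lemma one_mem_ring_of_integers: "1 \<in> ring_of_integers K"
  using Rats_mem[of 1] by (simp add: mem_ring_of_integers)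

lemma mem_princ_ideal_self: "x \<in> princ_ideal K x"
  unfolding princ_ideal_def using one_mem_ring_of_integers by force

lemma princ_ideal_mult: "ideal_mult (princ_ideal K x) (princ_ideal K y) = princ_ideal K (x * y)"
proof (intro equalityI subsetI)
  fix z assume "z \<in> ideal_mult (princ_ideal K x) (princ_ideal K y)"
  then obtain n :: nat and f g where fg: "\<forall>i<n. f i \<in> princ_ideal K x \<and> g i \<in> princ_ideal K y"
    and z: "z = (\<Sum>i<n. f i * g i)" unfolding ideal_mult_def by blast
  have "\<forall>i\<in>{..<n}. \<exists>\<alpha> \<beta>. \<alpha> \<in> ring_of_integers K \<and> \<beta> \<in> ring_of_integers K \<and> f i = x * \<alpha> \<and> g i = y * \<beta>"
    using fg unfolding princ_ideal_def by blast
  then obtain \<alpha> \<beta> where \<alpha>\<beta>: "\<forall>i<n. \<alpha> i \<in> ring_of_integers K \<and> \<beta> i \<in> ring_of_integers K \<and>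
      f i = x * \<alpha> i \<and> g i = y * \<beta> i"
    by (metis lessThan_iff)
  have "z = x * y * (\<Sum>i<n. \<alpha> i * \<beta> i)"
    unfolding z sum_distrib_left using \<alpha>\<beta> by (intro sum.cong) (auto simp: mult_ac)
  moreover have "(\<Sum>i<n. \<alpha> i * \<beta> i) \<in> ring_of_integers K"
    using \<alpha>\<beta> by (intro ring_of_integers_sum) auto
  ultimately show "z \<in> princ_ideal K (x * y)" unfolding princ_ideal_def by blast
next
  fix z assume "z \<in> princ_ideal K (x * y)"
  then obtain \<gamma> where "\<gamma> \<in> ring_of_integers K" "z = x * \<gamma> * y"
    unfolding princ_ideal_def by (auto simp: mult_ac)
  moreover have "x * \<gamma> \<in> princ_ideal K x" using calculation(1) unfolding princ_ideal_def by blast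
  ultimately show "z \<in> ideal_mult (princ_ideal K x) (princ_ideal K y)"
    unfolding ideal_mult_def using mem_princ_ideal_self[of y]
    by (intro CollectI exI[of _ "1::nat"] exI[of _ "\<lambda>_. x * \<gamma>"] exI[of _ "\<lambda>_. y"]) simp
qed

lemma princ_ideal_unit_mult:
  assumes "u \<noteq> 0" "u \<in> ring_of_integers K" "inverse u \<in> ring_of_integers K"
  shows "princ_ideal K (u * z) = princ_ideal K z"
proof -
  have sub: "princ_ideal K (v * w) \<subseteq> princ_ideal K w" if "v \<in> ring_of_integers K" for v w
    using that unfolding princ_ideal_def by (auto simp: mult.assoc intro!: imageI ring_of_integers_mult)
  have "princ_ideal K z \<subseteq> princ_ideal K (u * z)"
    using sub[OF assms(3), of "u * z"] assms(1) by (simp add: mult.assoc[symmetric])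
  with sub[OF assms(2), of z] show ?thesis by (rule equalityI)
qed

definition rat_coset :: "complex \<Rightarrow> complex set set" where
  "rat_coset x = (\<lambda>J. ideal_mult (princ_ideal K x) J) ` rat_ideals K"

lemma rat_coset_eq: "rat_coset x = (\<lambda>q. princ_ideal K (x * q)) ` (\<rat> - {0})"
proof -
  have "rat_ideals K = princ_ideal K ` (\<rat> - {0})" unfolding rat_ideals_def by blast
  thus ?thesis unfolding rat_coset_def by (simp add: image_image princ_ideal_mult)
qed

lemma ideal_group_index_sqrt_rat_ideals:
  "ideal_group_index (sqrt_rat_ideals K) (rat_ideals K) = card (rat_coset ` {\<rho> \<in> K. \<rho> \<noteq> 0 \<and> \<rho> ^ 2 \<in> \<rat>})"
proof -
  have "sqrt_rat_ideals K = princ_ideal K ` {\<rho> \<in> K. \<rho> \<noteq> 0 \<and> \<rho> ^ 2 \<in> \<rat>}"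
    unfolding sqrt_rat_ideals_def by blast
  thus ?thesis unfolding ideal_group_index_def rat_coset_def by (simp add: image_image)
qed

lemma rat_coset_rat_unit_mult:
  assumes "q \<in> \<rat>" "q \<noteq> 0" "u \<noteq> 0" "u \<in> ring_of_integers K" "inverse u \<in> ring_of_integers K"
  shows "rat_coset (q * u * y) = rat_coset y"
proof -
  have "princ_ideal K (q * u * y * p) = princ_ideal K (y * (q * p))" for p
  proof -
    have "q * u * y * p = u * (y * (q * p))" by (simp add: mult_ac)
    thus ?thesis by (simp only: princ_ideal_unit_mult[OF assms(3-5)])
  qed
  hence "rat_coset (q * u * y) = (\<lambda>p. princ_ideal K (y * p)) ` ((*) q ` (\<rat> - {0}))"
    unfolding rat_coset_eq image_image by simp
  also have "(*) q ` (\<rat> - {0}) = \<rat> - {0}"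
  proof (intro equalityI subsetI)
    fix p :: complex assume "p \<in> \<rat> - {0}"
    moreover have "p = q * (p / q)" using assms(2) by simp
    ultimately show "p \<in> (*) q ` (\<rat> - {0})" using assms(1,2) by (intro image_eqI[of p "(*) q" "p / q"]) auto
  qed (use assms(1,2) in auto)
  finally show ?thesis unfolding rat_coset_eq .
qed

lemma rat_coset_Rats_mult: "q \<in> \<rat> \<Longrightarrow> q \<noteq> 0 \<Longrightarrow> rat_coset (q * y) = rat_coset y"
  using rat_coset_rat_unit_mult[of q 1 y] one_mem_ring_of_integers by simp

lemma rat_coset_eq_imp_unit:
  assumes "x \<noteq> 0" "y \<noteq> 0" "rat_coset x = rat_coset y"
  obtains q where "q \<in> \<rat>" "q \<noteq> 0" "x / (y * q) \<in> ring_of_integers K" "y * q / x \<in> ring_of_integers K"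
proof -
  have "princ_ideal K (x * 1) \<in> rat_coset x"
    unfolding rat_coset_eq by (rule image_eqI[of _ _ 1]) auto
  hence "princ_ideal K x \<in> rat_coset y" using assms(3) by simp
  then obtain q where "q \<in> \<rat> - {0}" and eq: "princ_ideal K x = princ_ideal K (y * q)"
    unfolding rat_coset_eq by (rule imageE)
  hence q: "q \<in> \<rat>" "q \<noteq> 0" by simp_all
  have "x \<in> princ_ideal K (y * q)" using mem_princ_ideal_self[of x] eq by simp
  then obtain \<alpha> where \<alpha>: "x = y * q * \<alpha>" "\<alpha> \<in> ring_of_integers K"
    unfolding princ_ideal_def by (rule imageE)
  have "y * q \<in> princ_ideal K x" using mem_princ_ideal_self[of "y * q"] eq by simp
  then obtain \<beta> where \<beta>: "y * q = x * \<beta>" "\<beta> \<in> ring_of_integers K"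
    unfolding princ_ideal_def by (rule imageE)
  have "x / (y * q) = \<alpha>" using \<alpha>(1) q(2) assms(2) by simp
  moreover have "y * q / x = \<beta>" using \<beta>(1) assms(1) by simp
  ultimately show ?thesis using that[OF q] \<alpha>(2) \<beta>(2) by simp
qed

lemma ii_mem_of_ratio:
  assumes "x \<in> K" "y \<in> K" "y ^ 2 \<in> \<rat>" "q \<in> \<rat>" "x = \<i> * q * y" "x \<noteq> 0"
  shows "\<i> \<in> K"
proof -
  have "q * y ^ 2 \<noteq> 0" using assms(5,6) by auto
  hence "\<i> = 1 / (q * y ^ 2) * (x * y)"
    using assms(5) by (simp add: field_simps power2_eq_square)
  also have "\<dots> \<in> K"
  proof (rule mult_closed)
    show "1 / (q * y ^ 2) \<in> K" using assms(3,4) by (intro Rats_mem) simp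
    show "x * y \<in> K" using assms(1,2) by (rule mult_closed)
  qed
  finally show ?thesis .
qed

lemma rat_coset_eq_iff:
  assumes "x \<in> K" "y \<in> K" "x \<noteq> 0" "y \<noteq> 0" "x ^ 2 \<in> \<rat>" "y ^ 2 \<in> \<rat>"
  shows "rat_coset x = rat_coset y \<longleftrightarrow> (\<exists>q\<in>\<rat>. x = q * y \<or> x = \<i> * q * y)"
proof
  assume "rat_coset x = rat_coset y"
  then obtain q where q: "q \<in> \<rat>" "q \<noteq> 0"
    and u: "x / (y * q) \<in> ring_of_integers K" "y * q / x \<in> ring_of_integers K"
    using rat_coset_eq_imp_unit assms(3,4) by metis
  define u where "u = x / (y * q)"
  have x: "x = u * q * y" using q(2) assms(4) by (simp add: u_def)
  have "u \<noteq> 0" "inverse u = y * q / x" using q(2) assms(3,4) by (simp_all add: u_def)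
  hence "algebraic_int u" "algebraic_int (inverse u)"
    using u by (simp_all add: u_def mem_ring_of_integers)
  moreover have "u ^ 2 \<in> \<rat>" using assms(5,6) q(1) by (simp add: u_def power_divide power_mult_distrib)
  ultimately have "u ^ 2 = 1 \<or> u ^ 2 = -1"
    using algebraic_int_unit_square \<open>u \<noteq> 0\<close> by blast
  hence "u = 1 \<or> u = -1 \<or> u = \<i> \<or> u = - \<i>"
    by (metis power2_eq_1_iff power2_eq_iff power2_i)
  thus "\<exists>q\<in>\<rat>. x = q * y \<or> x = \<i> * q * y"
    using x q(1) by (elim disjE) (force intro: bexI[of _ "- q"])+
next
  assume "\<exists>q\<in>\<rat>. x = q * y \<or> x = \<i> * q * y"
  then obtain q where q: "q \<in> \<rat>" and x: "x = q * y \<or> x = q * \<i> * y"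
    by (auto simp: mult_ac)
  have "q \<noteq> 0" using x assms(3) by auto
  from x show "rat_coset x = rat_coset y"
  proof
    assume "x = q * y"
    thus ?thesis using rat_coset_Rats_mult[OF q \<open>q \<noteq> 0\<close>] by simp
  next
    assume x: "x = q * \<i> * y"
    hence "\<i> \<in> K" using ii_mem_of_ratio assms q by (simp add: mult_ac)
    hence "\<i> \<in> ring_of_integers K" "inverse \<i> \<in> ring_of_integers K"
      using mult_closed[OF Rats_mem[of "-1"]] by (simp_all add: mem_ring_of_integers)
    thus ?thesis using q \<open>q \<noteq> 0\<close> x by (simp add: rat_coset_rat_unit_mult)
  qed
qed

lemma rat_coset_eq_iff_is_int_square:
  assumes "x \<in> K" "y \<in> K" "x \<noteq> 0" "y \<noteq> 0" "x ^ 2 \<in> \<rat>" "y ^ 2 \<in> \<rat>"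
    and "w \<in> \<rat>" "w \<noteq> 0" "(x / y) ^ 2 = of_int t * w ^ 2" "\<not> is_int_square t"
  shows "rat_coset x = rat_coset y \<longleftrightarrow> is_int_square (- t)"
proof
  assume "rat_coset x = rat_coset y"
  then obtain q where q: "q \<in> \<rat>" and "x = q * y \<or> x = \<i> * q * y"
    using rat_coset_eq_iff assms(1-6) by blast
  hence "x / y = q \<or> x / y = \<i> * q" using assms(4) by auto
  hence "q ^ 2 = of_int t * w ^ 2 \<or> q ^ 2 = of_int (- t) * w ^ 2"
  proof
    assume "x / y = \<i> * q"
    hence "- (q ^ 2) = of_int t * w ^ 2" using assms(9) by (simp add: power_mult_distrib)
    thus ?thesis by (metis add.inverse_inverse of_int_minus mult_minus_left)
  qed (use assms(9) in simp)
  hence "(q / w) ^ 2 = of_int t \<or> (q / w) ^ 2 = of_int (- t)"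
    using assms(8) by (auto simp: power_divide simp del: of_int_minus)
  thus "is_int_square (- t)"
    using is_int_square_of_Rats[of "q / w"] q assms(7,10) by auto
next
  assume "is_int_square (- t)"
  then obtain c where "t = - (c * c)" unfolding is_int_square_def by (metis minus_minus)
  have "(\<i> * (of_int c * w)) ^ 2 = - ((of_int c) ^ 2 * w ^ 2)"
    by (simp add: power_mult_distrib)
  also have "\<dots> = of_int t * w ^ 2"
    using \<open>t = - (c * c)\<close> by (simp add: power2_eq_square)
  finally have "(x / y) ^ 2 = (\<i> * (of_int c * w)) ^ 2" using assms(9) by simp
  hence "x / y = \<i> * (of_int c * w) \<or> x / y = \<i> * (- of_int c * w)"
    by (simp add: power2_eq_iff)
  hence "x = \<i> * (of_int c * w) * y \<or> x = \<i> * (- of_int c * w) * y"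
    using assms(4) by (simp add: nonzero_divide_eq_eq)
  moreover have "of_int c * w \<in> \<rat>" "- of_int c * w \<in> \<rat>" using assms(7) by simp_all
  ultimately show "rat_coset x = rat_coset y"
    using rat_coset_eq_iff[OF assms(1-6)] by blast
qed

lemma ii_mem_if_is_int_square_neg:
  assumes "z \<in> K" "z ^ 2 = of_int t" "t \<noteq> 0" "is_int_square (- t)"
  shows "\<i> \<in> K"
proof -
  obtain c where c: "t = - (c * c)" using assms(4) unfolding is_int_square_def by (metis minus_minus)
  hence "c \<noteq> 0" using assms(3) by auto
  have "(\<i> * of_int c) ^ 2 = - ((of_int c) ^ 2)"
    by (simp add: power_mult_distrib)
  also have "\<dots> = of_int t"
    using c by (simp add: power2_eq_square)
  finally have "z ^ 2 = (\<i> * of_int c) ^ 2" using assms(2) by simp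
  hence "z = \<i> * of_int c \<or> z = - (\<i> * of_int c)"
    by (simp add: power2_eq_iff)
  hence "\<i> = 1 / of_int c * z \<or> \<i> = - 1 / of_int c * z"
    using \<open>c \<noteq> 0\<close> by auto
  moreover have "1 / of_int c \<in> K" "- 1 / of_int c \<in> K" by (simp_all add: Rats_mem)
  ultimately show ?thesis using mult_closed[OF _ assms(1)] by metis
qed

end

section \<open>Biquadratic fields\<close>

lemma csqrt_not_Rats: "\<not> is_int_square a \<Longrightarrow> csqrt (of_int a) \<notin> \<rat>"
  using is_int_square_of_Rats[of "csqrt (of_int a)" a] by auto

lemma Rats_independent_csqrt:
  assumes "\<not> is_int_square a" "x \<in> \<rat>" "y \<in> \<rat>" "x + y * csqrt (of_int a) = 0"
  shows "x = 0 \<and> y = 0"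
proof (cases "y = 0")
  case False
  hence "csqrt (of_int a) = - x / y" using assms(4) by (simp add: field_simps add_eq_0_iff)
  hence "csqrt (of_int a) \<in> \<rat>" using assms(2,3) by simp
  with csqrt_not_Rats[OF assms(1)] show ?thesis by contradiction
qed (use assms(4) in simp)

lemma csqrt_notin_Rats_span_csqrt:
  assumes "\<not> is_int_square a" "\<not> is_int_square b" "\<not> is_int_square (a * b)" "u \<in> \<rat>" "v \<in> \<rat>"
  shows "csqrt (of_int b) \<noteq> u + v * csqrt (of_int a)"
proof
  assume eq: "csqrt (of_int b) = u + v * csqrt (of_int a)"
  have "of_int b = (u + v * csqrt (of_int a)) ^ 2" by (simp flip: eq)
  also have "\<dots> = (u ^ 2 + v ^ 2 * of_int a) + 2 * u * v * csqrt (of_int a)"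
    by (simp add: power2_sum power_mult_distrib algebra_simps)
  finally have "(u ^ 2 + v ^ 2 * of_int a - of_int b) + (2 * u * v) * csqrt (of_int a) = 0"
    by simp
  hence "u ^ 2 + v ^ 2 * of_int a - of_int b = 0 \<and> 2 * u * v = 0"
    by (rule Rats_independent_csqrt[OF assms(1), rotated 2]) (use assms(4,5) in simp_all)
  hence b: "of_int b = u ^ 2 + v ^ 2 * of_int a" and "u = 0 \<or> v = 0" by simp_all
  from this(2) show False
  proof (elim disjE)
    assume "u = 0"
    hence "(v * of_int a) ^ 2 = of_int (a * b)" using b by (simp add: power2_eq_square)
    thus False using is_int_square_of_Rats[of "v * of_int a" "a * b"] assms(3,5) by simp
  next
    assume "v = 0"
    thus False using is_int_square_of_Rats[of u b] assms(2,4) b by auto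
  qed
qed

lemma biquadratic_product:
  fixes X Y :: "'a :: comm_ring_1"
  assumes "X ^ 2 = A" "Y ^ 2 = B"
  shows "(p + q * X + r * Y + s * X * Y) * (p' + q' * X + r' * Y + s' * X * Y) =
    (p * p' + q * q' * A + r * r' * B + s * s' * A * B) + (p * q' + q * p' + (r * s' + s * r') * B) * X
    + (p * r' + r * p' + (q * s' + s * q') * A) * Y + (p * s' + s * p' + q * r' + r * q') * X * Y"
  unfolding assms[symmetric] by (simp add: power2_eq_square algebra_simps)

lemma quad_field2I:
  assumes "p \<in> \<rat>" "q \<in> \<rat>" "r \<in> \<rat>" "s \<in> \<rat>"
  shows "p + q * csqrt (of_int a) + r * csqrt (of_int b) + s * csqrt (of_int a) * csqrt (of_int b)
    \<in> quad_field2 a b"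
  unfolding quad_field2_def using assms by blast

lemma quad_field2E:
  assumes "x \<in> quad_field2 a b"
  obtains p q r s where "p \<in> \<rat>" "q \<in> \<rat>" "r \<in> \<rat>" "s \<in> \<rat>"
    "x = p + q * csqrt (of_int a) + r * csqrt (of_int b) + s * csqrt (of_int a) * csqrt (of_int b)"
  using assms unfolding quad_field2_def by blast

interpretation quad_field2: rat_subalgebra "quad_field2 a b" for a b
proof
  let ?sa = "csqrt (of_int a :: complex)" and ?sb = "csqrt (of_int b :: complex)"
  show "\<rat> \<subseteq> quad_field2 a b"
  proof
    fix x :: complex assume "x \<in> \<rat>"
    from quad_field2I[OF this Rats_0 Rats_0 Rats_0] show "x \<in> quad_field2 a b" by simp
  qed
  fix x y assume "x \<in> quad_field2 a b" "y \<in> quad_field2 a b"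
  then obtain p q r s p' q' r' s' where
      x: "p \<in> \<rat>" "q \<in> \<rat>" "r \<in> \<rat>" "s \<in> \<rat>" "x = p + q * ?sa + r * ?sb + s * ?sa * ?sb" and
      y: "p' \<in> \<rat>" "q' \<in> \<rat>" "r' \<in> \<rat>" "s' \<in> \<rat>" "y = p' + q' * ?sa + r' * ?sb + s' * ?sa * ?sb"
    by (metis quad_field2E)
  have "x + y = (p + p') + (q + q') * ?sa + (r + r') * ?sb + (s + s') * ?sa * ?sb"
    unfolding x(5) y(5) by (simp add: algebra_simps)
  also have "\<dots> \<in> quad_field2 a b"
    using x y by (intro quad_field2I) simp_all
  finally show "x + y \<in> quad_field2 a b" .
  show "x * y \<in> quad_field2 a b"
    unfolding x(5) y(5) biquadratic_product[OF power2_csqrt power2_csqrt]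
    using x y by (intro quad_field2I) simp_all
qed

lemma conjugate_product:
  fixes X Y :: "'a :: comm_ring_1"
  assumes "X ^ 2 = A"
  shows "((p + q * X) + (r + s * X) * Y) * (r - s * X) =
    (p * r - q * s * A) + (q * r - p * s) * X + (r ^ 2 - s ^ 2 * A) * Y"
  unfolding assms[symmetric] by (simp add: power2_eq_square algebra_simps)

lemma not_is_int_square_neg_one: "\<not> is_int_square (- 1)"
  unfolding is_int_square_def by (metis neg_0_le_iff_le not_one_le_zero zero_le_square)

lemma card_image_four:
  assumes "f x2 = f x1 \<longleftrightarrow> A" "f x4 = f x3 \<longleftrightarrow> A" "f x3 = f x1 \<longleftrightarrow> B" "f x4 = f x2 \<longleftrightarrow> B"
    "f x4 = f x1 \<longleftrightarrow> C" "f x2 = f x3 \<longleftrightarrow> C" "\<not> (A \<and> B)"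
  shows "card (f ` {x1, x2, x3, x4}) = (if A \<or> B \<or> C then 2 else 4)"
proof -
  consider A | B | C | "\<not> A" "\<not> B" "\<not> C" by blast
  thus ?thesis
  proof cases
    case 1
    hence "f ` {x1, x2, x3, x4} = {f x1, f x3}" "f x1 \<noteq> f x3" using assms by auto
    thus ?thesis using 1 by simp
  next
    case 2
    hence "f ` {x1, x2, x3, x4} = {f x1, f x2}" "f x1 \<noteq> f x2" using assms by auto
    thus ?thesis using 2 by simp
  next
    case 3
    hence "f ` {x1, x2, x3, x4} = {f x1, f x2}" "f x1 \<noteq> f x2" using assms by auto
    thus ?thesis using 3 by simp
  next
    case 4
    thus ?thesis using assms by (simp add: card_insert_if)
  qed
qed

context
  fixes a b :: int
  assumes a_nonsquare: "\<not> is_int_square a" and b_nonsquare: "\<not> is_int_square b"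
    and ab_nonsquare: "\<not> is_int_square (a * b)"
begin

abbreviation sqrt_a :: complex where "sqrt_a \<equiv> csqrt (of_int a)"
abbreviation sqrt_b :: complex where "sqrt_b \<equiv> csqrt (of_int b)"

lemma quad_field2_independent:
  assumes "p \<in> \<rat>" "q \<in> \<rat>" "r \<in> \<rat>" "s \<in> \<rat>" "p + q * sqrt_a + r * sqrt_b + s * sqrt_a * sqrt_b = 0"
  shows "p = 0 \<and> q = 0 \<and> r = 0 \<and> s = 0"
proof (cases "r = 0 \<and> s = 0")
  case True
  thus ?thesis using Rats_independent_csqrt[OF a_nonsquare assms(1,2)] assms(5) by simp
next
  case False
  define N where "N = r ^ 2 - s ^ 2 * of_int a"
  have "N \<noteq> 0"
  proof
    assume "N = 0"
    with False have "s \<noteq> 0" unfolding N_def by auto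
    with \<open>N = 0\<close> have "(r / s) ^ 2 = of_int a" unfolding N_def by (simp add: power_divide field_simps)
    thus False using is_int_square_of_Rats[of "r / s" a] assms(3,4) a_nonsquare by simp
  qed
  define P where "P = p * r - q * s * of_int a"
  define Q where "Q = q * r - p * s"
  have "0 = ((p + q * sqrt_a) + (r + s * sqrt_a) * sqrt_b) * (r - s * sqrt_a)"
    using assms(5) by (simp add: algebra_simps)
  also have "\<dots> = P + Q * sqrt_a + N * sqrt_b"
    unfolding N_def P_def Q_def by (rule conjugate_product[OF power2_csqrt])
  finally have "N * sqrt_b = - P - Q * sqrt_a"
    by (simp add: algebra_simps eq_neg_iff_add_eq_0)
  hence "sqrt_b = - P / N + (- Q / N) * sqrt_a"
    using \<open>N \<noteq> 0\<close> by (simp add: field_simps)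
  moreover have "- P / N \<in> \<rat>" "- Q / N \<in> \<rat>"
    using assms(1-4) by (simp_all add: N_def P_def Q_def)
  ultimately show ?thesis using csqrt_notin_Rats_span_csqrt[OF a_nonsquare b_nonsquare ab_nonsquare] by blast
qed

lemma a_nonzero: "a \<noteq> 0" and b_nonzero: "b \<noteq> 0"
  using a_nonsquare b_nonsquare unfolding is_int_square_def by auto

lemma sqrt_rat_coords:
  assumes "p \<in> \<rat>" "q \<in> \<rat>"
    and e1: "p * q + r * s * of_int b = 0" and e2: "p * r + q * s * of_int a = 0" and e3: "p * s + q * r = 0"
  shows "(q = 0 \<and> r = 0 \<and> s = 0) \<or> (p = 0 \<and> r = 0 \<and> s = 0) \<or> (p = 0 \<and> q = 0 \<and> s = 0) \<or> (p = 0 \<and> q = 0 \<and> r = 0)"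
proof -
  have "False" if "p \<noteq> 0" "q \<noteq> 0" "r \<noteq> 0" "s \<noteq> 0"
  proof -
    have "p * s = - (q * r)" using e3 by (simp add: eq_neg_iff_add_eq_0)
    have "0 = p * (p * r + q * s * of_int a)" using e2 by simp
    also have "\<dots> = p * p * r + (p * s) * q * of_int a" by (simp add: algebra_simps)
    also have "\<dots> = r * (p * p - q * q * of_int a)"
      unfolding \<open>p * s = - (q * r)\<close> by (simp add: algebra_simps)
    finally have "r * (p * p - q * q * of_int a) = 0" ..
    hence "(p / q) ^ 2 = of_int a" using that by (simp add: power_divide field_simps power2_eq_square)
    thus False using is_int_square_of_Rats[of "p / q" a] assms(1,2) a_nonsquare by simp
  qed
  moreover have "r \<noteq> 0 \<and> s \<noteq> 0" if "p \<noteq> 0" "q \<noteq> 0" using e1 that b_nonzero by auto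
  moreover have "q \<noteq> 0 \<and> s \<noteq> 0" if "p \<noteq> 0" "r \<noteq> 0" using e2 that a_nonzero by auto
  moreover have "q \<noteq> 0 \<and> r \<noteq> 0" if "p \<noteq> 0" "s \<noteq> 0" using e3 that by (auto simp: add_eq_0_iff)
  moreover have "p \<noteq> 0 \<and> s \<noteq> 0" if "q \<noteq> 0" "r \<noteq> 0" using e2 e3 that a_nonzero by (auto simp: add_eq_0_iff)
  moreover have "p \<noteq> 0 \<and> r \<noteq> 0" if "q \<noteq> 0" "s \<noteq> 0" using e1 e2 that a_nonzero b_nonzero by (auto simp: add_eq_0_iff)
  moreover have "p \<noteq> 0 \<and> q \<noteq> 0" if "r \<noteq> 0" "s \<noteq> 0" using e1 e3 that b_nonzero by (auto simp: add_eq_0_iff)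
  ultimately show ?thesis by blast
qed

lemma quad_field2_sqrt_rat_cases:
  assumes "\<rho> \<in> quad_field2 a b" "\<rho> ^ 2 \<in> \<rat>"
  obtains c g where "c \<in> \<rat>" "g \<in> {1, sqrt_a, sqrt_b, sqrt_a * sqrt_b}" "\<rho> = c * g"
proof -
  obtain p q r s where pqrs: "p \<in> \<rat>" "q \<in> \<rat>" "r \<in> \<rat>" "s \<in> \<rat>"
    and \<rho>: "\<rho> = p + q * sqrt_a + r * sqrt_b + s * sqrt_a * sqrt_b"
    using assms(1) by (rule quad_field2E)
  obtain t where t: "t \<in> \<rat>" "\<rho> ^ 2 = t" using assms(2) by blast
  have "\<rho> ^ 2 = (p * p + q * q * of_int a + r * r * of_int b + s * s * of_int a * of_int b)
      + (2 * (p * q + r * s * of_int b)) * sqrt_a + (2 * (p * r + q * s * of_int a)) * sqrt_b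
      + (2 * (p * s + q * r)) * sqrt_a * sqrt_b"
    unfolding \<rho> power2_eq_square biquadratic_product[OF power2_csqrt power2_csqrt]
    by (simp add: algebra_simps)
  hence "(p * p + q * q * of_int a + r * r * of_int b + s * s * of_int a * of_int b - t)
      + (2 * (p * q + r * s * of_int b)) * sqrt_a + (2 * (p * r + q * s * of_int a)) * sqrt_b
      + (2 * (p * s + q * r)) * sqrt_a * sqrt_b = 0"
    using t(2) by (simp add: algebra_simps)
  hence "2 * (p * q + r * s * of_int b) = 0 \<and> 2 * (p * r + q * s * of_int a) = 0
      \<and> 2 * (p * s + q * r) = 0"
    by (rule quad_field2_independent[rotated 4, THEN conjunct2]) (use pqrs t(1) in simp_all)
  moreover have "2 * z = 0 \<Longrightarrow> z = 0" for z :: complex by simp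
  ultimately have "p * q + r * s * of_int b = 0" "p * r + q * s * of_int a = 0" "p * s + q * r = 0"
    by blast+
  with pqrs(1,2) have "(q = 0 \<and> r = 0 \<and> s = 0) \<or> (p = 0 \<and> r = 0 \<and> s = 0)
      \<or> (p = 0 \<and> q = 0 \<and> s = 0) \<or> (p = 0 \<and> q = 0 \<and> r = 0)"
    by (rule sqrt_rat_coords)
  thus ?thesis
  proof (elim disjE)
    assume "q = 0 \<and> r = 0 \<and> s = 0" thus ?thesis using that[of p 1] pqrs \<rho> by simp
  next
    assume "p = 0 \<and> r = 0 \<and> s = 0" thus ?thesis using that[of q sqrt_a] pqrs \<rho> by simp
  next
    assume "p = 0 \<and> q = 0 \<and> s = 0" thus ?thesis using that[of r sqrt_b] pqrs \<rho> by simp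
  next
    assume "p = 0 \<and> q = 0 \<and> r = 0"
    thus ?thesis using that[of s "sqrt_a * sqrt_b"] pqrs \<rho> by (simp add: mult.assoc)
  qed
qed

lemma sqrt_rat_generators:
  "{1, sqrt_a, sqrt_b, sqrt_a * sqrt_b} \<subseteq> {\<rho> \<in> quad_field2 a b. \<rho> \<noteq> 0 \<and> \<rho> ^ 2 \<in> \<rat>}"
proof -
  have "1 \<in> quad_field2 a b" "sqrt_a \<in> quad_field2 a b" "sqrt_b \<in> quad_field2 a b"
    "sqrt_a * sqrt_b \<in> quad_field2 a b"
    using quad_field2I[of 1 0 0 0 a b] quad_field2I[of 0 1 0 0 a b] quad_field2I[of 0 0 1 0 a b]
      quad_field2I[of 0 0 0 1 a b] by simp_all
  thus ?thesis using a_nonzero b_nonzero by (simp add: power_mult_distrib)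
qed

lemma rat_coset_image_sqrt_rat:
  "quad_field2.rat_coset a b ` {\<rho> \<in> quad_field2 a b. \<rho> \<noteq> 0 \<and> \<rho> ^ 2 \<in> \<rat>}
    = quad_field2.rat_coset a b ` {1, sqrt_a, sqrt_b, sqrt_a * sqrt_b}"
proof
  show "quad_field2.rat_coset a b ` {\<rho> \<in> quad_field2 a b. \<rho> \<noteq> 0 \<and> \<rho> ^ 2 \<in> \<rat>}
    \<subseteq> quad_field2.rat_coset a b ` {1, sqrt_a, sqrt_b, sqrt_a * sqrt_b}"
  proof (rule image_subsetI)
    fix \<rho> assume \<rho>: "\<rho> \<in> {\<rho> \<in> quad_field2 a b. \<rho> \<noteq> 0 \<and> \<rho> ^ 2 \<in> \<rat>}"
    then obtain c g where c: "c \<in> \<rat>" and g: "g \<in> {1, sqrt_a, sqrt_b, sqrt_a * sqrt_b}"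
      and "\<rho> = c * g"
      using quad_field2_sqrt_rat_cases by blast
    moreover from this \<rho> have "c \<noteq> 0" by auto
    ultimately have "quad_field2.rat_coset a b \<rho> = quad_field2.rat_coset a b g"
      by (simp add: quad_field2.rat_coset_Rats_mult)
    with g show "quad_field2.rat_coset a b \<rho> \<in> quad_field2.rat_coset a b ` {1, sqrt_a, sqrt_b, sqrt_a * sqrt_b}"
      by (simp only: image_eqI)
  qed
qed (use sqrt_rat_generators in blast)

lemma ii_mem_quad_field2_iff:
  "\<i> \<in> quad_field2 a b \<longleftrightarrow> is_int_square (- a) \<or> is_int_square (- b) \<or> is_int_square (- (a * b))"
proof
  assume "\<i> \<in> quad_field2 a b"
  then obtain c g where c: "c \<in> \<rat>" and g: "g \<in> {1, sqrt_a, sqrt_b, sqrt_a * sqrt_b}"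
    and ii: "\<i> = c * g"
    using quad_field2_sqrt_rat_cases by (metis Rats_minus_iff Rats_1 power2_i)
  note neg_square = is_int_square_neg_if_ii_eq[OF ii c]
  from g show "is_int_square (- a) \<or> is_int_square (- b) \<or> is_int_square (- (a * b))"
  proof (elim insertE)
    assume "g = 1"
    thus ?thesis using neg_square[of 1] not_is_int_square_neg_one by simp
  qed (use neg_square in \<open>simp_all add: power_mult_distrib\<close>)
next
  have "sqrt_a \<in> quad_field2 a b" "sqrt_b \<in> quad_field2 a b" "sqrt_a * sqrt_b \<in> quad_field2 a b"
    using sqrt_rat_generators by auto
  moreover have "(sqrt_a * sqrt_b) ^ 2 = of_int (a * b)" by (simp add: power_mult_distrib)
  moreover have "a * b \<noteq> 0" using a_nonzero b_nonzero by simp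
  ultimately show "is_int_square (- a) \<or> is_int_square (- b) \<or> is_int_square (- (a * b)) \<Longrightarrow> \<i> \<in> quad_field2 a b"
    using quad_field2.ii_mem_if_is_int_square_neg a_nonzero b_nonzero power2_csqrt by metis
qed

lemma card_rat_coset_sqrt_rat_generators:
  "card (quad_field2.rat_coset a b ` {1, sqrt_a, sqrt_b, sqrt_a * sqrt_b})
    = (if is_int_square (- a) \<or> is_int_square (- b) \<or> is_int_square (- (a * b)) then 2 else 4)"
proof (rule card_image_four)
  have eq_iff: "quad_field2.rat_coset a b x = quad_field2.rat_coset a b y \<longleftrightarrow> is_int_square (- t)"
    if "x \<in> {1, sqrt_a, sqrt_b, sqrt_a * sqrt_b}" "y \<in> {1, sqrt_a, sqrt_b, sqrt_a * sqrt_b}"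
      "w \<in> \<rat>" "w \<noteq> 0" "(x / y) ^ 2 = of_int t * w ^ 2" "\<not> is_int_square t" for x y w t
    using sqrt_rat_generators that by (intro quad_field2.rat_coset_eq_iff_is_int_square) auto
  have ab_ratio: "(sqrt_a / sqrt_b) ^ 2 = of_int (a * b) * (1 / of_int b) ^ 2"
    using b_nonzero by (simp add: power_divide field_simps power2_eq_square[of "of_int b"])
  show "quad_field2.rat_coset a b sqrt_a = quad_field2.rat_coset a b 1 \<longleftrightarrow> is_int_square (- a)"
    by (rule eq_iff[where w = 1]) (simp_all add: a_nonsquare)
  show "quad_field2.rat_coset a b (sqrt_a * sqrt_b) = quad_field2.rat_coset a b sqrt_b \<longleftrightarrow> is_int_square (- a)"
    by (rule eq_iff[where w = 1]) (simp_all add: a_nonsquare b_nonzero)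
  show "quad_field2.rat_coset a b sqrt_b = quad_field2.rat_coset a b 1 \<longleftrightarrow> is_int_square (- b)"
    by (rule eq_iff[where w = 1]) (simp_all add: b_nonsquare)
  show "quad_field2.rat_coset a b (sqrt_a * sqrt_b) = quad_field2.rat_coset a b sqrt_a \<longleftrightarrow> is_int_square (- b)"
    by (rule eq_iff[where w = 1]) (simp_all add: b_nonsquare a_nonzero)
  show "quad_field2.rat_coset a b (sqrt_a * sqrt_b) = quad_field2.rat_coset a b 1 \<longleftrightarrow> is_int_square (- (a * b))"
    by (rule eq_iff[where w = 1]) (simp_all add: ab_nonsquare power_mult_distrib)
  show "quad_field2.rat_coset a b sqrt_a = quad_field2.rat_coset a b sqrt_b \<longleftrightarrow> is_int_square (- (a * b))"
    by (rule eq_iff[OF _ _ _ _ ab_ratio]) (simp_all add: ab_nonsquare b_nonzero)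
  show "\<not> (is_int_square (- a) \<and> is_int_square (- b))"
  proof
    assume "is_int_square (- a) \<and> is_int_square (- b)"
    then obtain c d where "- a = c * c" "- b = d * d" unfolding is_int_square_def by blast
    hence "a * b = (c * d) * (c * d)" by (metis minus_mult_minus mult.commute mult.left_commute)
    thus False using ab_nonsquare unfolding is_int_square_def by blast
  qed
qed

lemma ideal_group_index_quad_field2:
  "ideal_group_index (sqrt_rat_ideals (quad_field2 a b)) (rat_ideals (quad_field2 a b))
    = (if \<i> \<in> quad_field2 a b then 2 else 4)"
  by (simp only: quad_field2.ideal_group_index_sqrt_rat_ideals rat_coset_image_sqrt_rat
      card_rat_coset_sqrt_rat_generators ii_mem_quad_field2_iff)

end

theorem mainTheorem9:
  fixes K :: "complex set"
  assumes "biquadratic_bicyclic K"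
  shows "ideal_group_index (sqrt_rat_ideals K) (rat_ideals K) = (if \<i> \<in> K then 2 else 4)"
proof -
  obtain a b where "\<not> is_int_square a" "\<not> is_int_square b" "\<not> is_int_square (a * b)"
    and "K = quad_field2 a b"
    using assms unfolding biquadratic_bicyclic_def by blast
  thus ?thesis by (simp add: ideal_group_index_quad_field2)
qed

end
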